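(* Under the hypotheses and notation below, the two transformed potentials $$u^{[N]}_0=u+\mathrm{i}\left(\varphi^{(2)\dagger}\mathbf{M}^{-1}\varphi^{(1)}\right)_x$$ and $$u^{[N]}_\infty=\frac{1+2\varphi^{(1)\dagger}\mathbf{\Lambda}^\dagger\mathbf{M}^{-1}\varphi^{(1)}}{1-2\varphi^{(2)\dagger}\mathbf{\Lambda}^\dagger(\mathbf{M}^\dagger)^{-1}\varphi^{(2)}}\,u+\frac{4\varphi^{(2)\dagger}(\mathbf{\Lambda}^{\dagger})^2\mathbf{M}^{-1}\varphi^{(1)}}{1-2\varphi^{(2)\dagger}\mathbf{\Lambda}^\dagger(\mathbf{M}^\dagger)^{-1}\varphi^{(2)}}$$ coincide: $u^{[N]}_0=u^{[N]}_\infty$.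
   Context: Let $u\in L^{\infty}\cap C^{\infty}$ be a solution of the DNLS equation $\mathrm{i}u_t+u_{xx}+2\mathrm{i}(|u|^2u)_x=0$. $^*$ denotes complex conjugation, $^\dagger$ conjugate transpose, $\sigma_3=\mathrm{diag}(1,-1)$, $\mathbf{Q}=\begin{pmatrix}0&\mathrm{i}u\\ \mathrm{i}u^*&0\end{pmatrix}$, $\mathbf{U}(\mathbf{Q};\lambda)=-2\mathrm{i}\sigma_3\lambda^2+2\mathbf{Q}\lambda$, $\mathbf{V}(\mathbf{Q};\lambda)=(4\lambda^2+2\mathbf{Q}^2)\mathbf{U}(\mathbf{Q};\lambda)+2\mathrm{i}\sigma_3\mathbf{Q}_x\lambda$. Let $N\ge1$, $\lambda_1,\dots,\lambda_N\in\mathbb{C}$ with $\lambda_j^*\neq\pm\lambda_i$ for all $i,j$, and let $\varphi_i=(\varphi_i^{(1)},\varphi_i^{(2)})^T$ solve $\varphi_x=\mathbf{U}(\mathbf{Q};\lambda_i)\varphi$, $\varphi_t=\mathbf{V}(\mathbf{Q};\lambda_i)\varphi$. Put $\varphi^{(k)}=(\varphi_1^{(k)},\dots,\varphi_N^{(k)})^T$, $\mathbf{\Lambda}=\mathrm{diag}(\lambda_i)$, and $\mathbf{M}_{ij}=\left(\frac{\varphi_j^{\dagger}\varphi_i}{\lambda_j^{*}-\lambda_i}-\frac{\varphi_j^{\dagger}\sigma_3\varphi_i}{\lambda_j^{*}+\lambda_i}\right)\lambda_i\lambda_j^{*}$. Assume $\mathbf{M}$ is invertible and $1-2\varphi^{(2)\dagger}\mathbf{\Lambda}^\dagger(\mathbf{M}^\dagger)^{-1}\varphi^{(2)}\ne0$.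 *)

theory Defs
  imports "HOL-Analysis.Analysis"
begin

definition px :: "(real \<times> real \<Rightarrow> complex) \<Rightarrow> real \<times> real \<Rightarrow> complex" where
  "px f = (\<lambda>(x, t). vector_derivative (\<lambda>s. f (s, t)) (at x))"

definition pt :: "(real \<times> real \<Rightarrow> complex) \<Rightarrow> real \<times> real \<Rightarrow> complex" where
  "pt f = (\<lambda>(x, t). vector_derivative (\<lambda>s. f (x, s)) (at t))"

fun iter_partial :: "bool list \<Rightarrow> (real \<times> real \<Rightarrow> complex) \<Rightarrow> real \<times> real \<Rightarrow> complex" where
  "iter_partial [] f = f"
| "iter_partial (b # bs) f = (if b then px else pt) (iter_partial bs f)"

definition Cinf :: "(real \<times> real \<Rightarrow> complex) \<Rightarrow> bool" where
  "Cinf f \<longleftrightarrow> (\<forall>bs. iter_partial bs f differentiable_on UNIV)"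

definition cscale :: "complex \<Rightarrow> complex^'m^'n \<Rightarrow> complex^'m^'n" where
  "cscale c A = (\<chi> i j. c * A$i$j)"

definition ctrans :: "complex^'m^'n \<Rightarrow> complex^'n^'m" where
  "ctrans A = (\<chi> i j. cnj (A$j$i))"

definition hdot :: "complex^'n \<Rightarrow> complex^'n \<Rightarrow> complex" where
  "hdot a b = (\<Sum>i\<in>UNIV. cnj (a$i) * b$i)"

definition diagm :: "('n \<Rightarrow> complex) \<Rightarrow> complex^'n^'n" where
  "diagm d = (\<chi> i j. if i = j then d i else 0)"

definition sigma3 :: "complex^2^2" where
  "sigma3 = vector [vector [1, 0], vector [0, -1]]"

definition Qmat :: "complex \<Rightarrow> complex^2^2" where
  "Qmat w = vector [vector [0, \<i> * w], vector [\<i> * cnj w, 0]]"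

definition Umat :: "complex^2^2 \<Rightarrow> complex \<Rightarrow> complex^2^2" where
  "Umat Q l = cscale (-2 * \<i> * l^2) sigma3 + cscale (2 * l) Q"

definition Vmat :: "complex^2^2 \<Rightarrow> complex^2^2 \<Rightarrow> complex \<Rightarrow> complex^2^2" where
  "Vmat Q Qx l = (cscale (4 * l^2) (mat 1) + cscale 2 (Q ** Q)) ** Umat Q l
                 + cscale (2 * \<i> * l) (sigma3 ** Qx)"

definition Mmat :: "('n \<Rightarrow> complex) \<Rightarrow> ('n \<Rightarrow> complex^2) \<Rightarrow> complex^'n^'n" where
  "Mmat lam ph = (\<chi> i j.
     (hdot (ph j) (ph i) / (cnj (lam j) - lam i)
      - hdot (ph j) (sigma3 *v ph i) / (cnj (lam j) + lam i)) * lam i * cnj (lam j))"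

definition comp_vec :: "('n \<Rightarrow> complex^2) \<Rightarrow> 2 \<Rightarrow> complex^'n" where
  "comp_vec ph k = (\<chi> i. ph i $ k)"

end

theory Submission
  imports Defs
begin

text \<open>Write L = diag lam, A = phi^(1), B = phi^(2), Y = M^-1 A and W = (M\<dagger>)^-1 B.
  The matrix M solves the Sylvester equation M L\<dagger>^2 - L^2 M = 2 (L B)(L^2 B)\<dagger> + 2 (L^2 A)(L A)\<dagger>
  and the equation L M\<dagger> + M L\<dagger> = 2 (L B)(L B)\<dagger>. Sandwiching them between W\<dagger> and Y, resp. W,
  gives two scalar relations; the second reads (1 - 2 W\<dagger> L B)(1 - 2 B\<dagger> L\<dagger> W) = 1, so the
  denominator of u_inf cannot vanish. Differentiating B\<dagger> M^-1 A via (M^-1 A)_x = M^-1 (A_x - M_x Y)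
  and inserting the x-part of the Lax pair for A_x, B_x and M_x expresses u_0 through the same
  scalars, and the two relations turn it into u_inf.\<close>

section \<open>Hermitian forms and matrices\<close>

lemma matrix_inv_inverse:
  fixes A :: "'a::semiring_1^'n^'m"
  assumes "invertible A"
  shows "A ** matrix_inv A = mat 1" and "matrix_inv A ** A = mat 1"
  using someI_ex[OF assms[unfolded invertible_def]] unfolding matrix_inv_def by auto

lemma matrix_vector_mult_matrix_inv_cancel:
  fixes A :: "'a::comm_semiring_1^'n^'m"
  assumes "invertible A"
  shows "A *v (matrix_inv A *v v) = v" and "matrix_inv A *v (A *v w) = w"
  by (simp_all add: matrix_vector_mul_assoc matrix_inv_inverse[OF assms])

lemma ctrans_matrix_mult: "ctrans ((A::complex^'n^'m) ** B) = ctrans B ** ctrans A"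
  by (simp add: vec_eq_iff ctrans_def matrix_matrix_mult_def mult.commute)

lemma ctrans_mat_1: "ctrans (mat 1 :: complex^'n^'n) = mat 1"
  by (simp add: vec_eq_iff ctrans_def mat_def)

lemma invertible_ctrans:
  fixes A :: "complex^'n^'n"
  assumes "invertible A"
  shows "invertible (ctrans A)"
  using matrix_inv_inverse[OF assms] unfolding invertible_def
  by (metis ctrans_matrix_mult ctrans_mat_1)

lemma diagm_mult_vec: "diagm d *v v = (\<chi> i. d i * v $ i)"
proof -
  have "(\<Sum>j\<in>UNIV. diagm d $ i $ j * v $ j) = (\<Sum>j\<in>UNIV. if i = j then d i * v $ j else 0)" for i
    by (rule sum.cong) (auto simp: diagm_def)
  then show ?thesis by (simp add: vec_eq_iff matrix_vector_mult_def)
qed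

lemma ctrans_diagm: "ctrans (diagm d) = diagm (\<lambda>i. cnj (d i))"
  by (simp add: vec_eq_iff ctrans_def diagm_def)

lemma ctrans_ctrans: "ctrans (ctrans A) = A"
  by (simp add: vec_eq_iff ctrans_def)

lemma diagm_matrix_mult_diagm: "diagm f ** diagm g = diagm (\<lambda>i. f i * g i)"
proof -
  have "(\<Sum>k\<in>UNIV. diagm f $ i $ k * diagm g $ k $ j)
      = (\<Sum>k\<in>UNIV. if k = i then diagm f $ i $ k * diagm g $ k $ j else 0)" for i j
    by (rule sum.cong) (auto simp: diagm_def)
  then show ?thesis by (simp add: vec_eq_iff matrix_matrix_mult_def diagm_def)
qed

lemma matrix_mult_diagm_nth: "(A ** diagm d) $ i $ j = A $ i $ j * d j"
proof -
  have "(\<Sum>k\<in>UNIV. A $ i $ k * diagm d $ k $ j) = (\<Sum>k\<in>UNIV. if k = j then A $ i $ k * d j else 0)"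
    by (rule sum.cong) (auto simp: diagm_def)
  then show ?thesis by (simp add: matrix_matrix_mult_def)
qed

lemma diagm_matrix_mult_nth: "(diagm d ** A) $ i $ j = d i * A $ i $ j"
proof -
  have "(\<Sum>k\<in>UNIV. diagm d $ i $ k * A $ k $ j) = (\<Sum>k\<in>UNIV. if k = i then d i * A $ k $ j else 0)"
    by (rule sum.cong) (auto simp: diagm_def)
  then show ?thesis by (simp add: matrix_matrix_mult_def)
qed

lemma cscale_mult_vec: "cscale c A *v v = c *s (A *v v)"
  by (simp add: vec_eq_iff cscale_def matrix_vector_mult_def sum_distrib_left mult.assoc)

lemma hdot_add_left: "hdot (u + v) w = hdot u w + hdot v w"
  and hdot_add_right: "hdot w (u + v) = hdot w u + hdot w v"
  and hdot_diff_right: "hdot w (u - v) = hdot w u - hdot w v"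
  and hdot_scale_left: "hdot (c *s u) w = cnj c * hdot u w"
  and hdot_scale_right: "hdot w (c *s u) = c * hdot w u"
  by (simp_all add: hdot_def algebra_simps sum.distrib sum_subtractf sum_distrib_left)

lemma hdot_2: "hdot (v::complex^2) w = cnj (v $ 1) * w $ 1 + cnj (v $ 2) * w $ 2"
  by (simp add: hdot_def sum_2)

lemma hdot_ctrans_mult_vec: "hdot (ctrans A *v w) v = hdot w (A *v v)"
proof -
  have "hdot (ctrans A *v w) v = (\<Sum>j\<in>UNIV. \<Sum>i\<in>UNIV. cnj (w $ i) * (A $ i $ j * v $ j))"
    by (simp add: hdot_def ctrans_def matrix_vector_mult_def sum_distrib_left sum_distrib_right mult_ac)
  also have "\<dots> = hdot w (A *v v)"
    by (subst sum.swap) (simp add: hdot_def matrix_vector_mult_def sum_distrib_left)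
  finally show ?thesis .
qed

lemma hdot_matrix_inv_mult_vec:
  fixes A :: "complex^'n^'n"
  assumes "invertible A"
  shows "hdot b (matrix_inv A *v v) = hdot (matrix_inv (ctrans A) *v b) v"
  using hdot_ctrans_mult_vec[of A "matrix_inv (ctrans A) *v b" "matrix_inv A *v v"]
  by (simp add: matrix_vector_mult_matrix_inv_cancel(1)[OF invertible_ctrans[OF assms]]
      matrix_vector_mult_matrix_inv_cancel(1)[OF assms])

lemma hdot_mult_vec_ctrans: "hdot w (ctrans A *v v) = hdot (A *v w) v"
  using hdot_ctrans_mult_vec[of "ctrans A"] by (simp add: ctrans_ctrans)

definition outer :: "complex^'n \<Rightarrow> complex^'m \<Rightarrow> complex^'m^'n" where
  "outer u v = (\<chi> i j. u $ i * cnj (v $ j))"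

lemma outer_mult_vec: "outer u v *v w = hdot v w *s u"
  by (simp add: vec_eq_iff outer_def hdot_def matrix_vector_mult_def sum_distrib_left mult_ac)

section \<open>Differentiating b\<dagger> M^-1 a\<close>

lemma differentiable_prod_at:
  fixes f :: "'i \<Rightarrow> real \<Rightarrow> 'a::real_normed_field"
  assumes "\<And>i. i \<in> I \<Longrightarrow> f i differentiable (at x)"
  shows "(\<lambda>s. \<Prod>i\<in>I. f i s) differentiable (at x)"
proof -
  from assms obtain f' where "\<And>i. i \<in> I \<Longrightarrow> (f i has_derivative f' i) (at x)"
    unfolding differentiable_def by metis
  from has_derivative_prod[of I f f', OF this] show ?thesis
    unfolding differentiable_def by blast
qed

lemma differentiable_det:
  fixes A :: "real \<Rightarrow> 'a::real_normed_field^'n^'n"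
  assumes "\<And>i j. (\<lambda>s. A s $ i $ j) differentiable (at x)"
  shows "(\<lambda>s. det (A s)) differentiable (at x)"
  unfolding det_def
  by (intro differentiable_sum ballI differentiable_mult differentiable_const
      differentiable_prod_at assms finite_Collect_subsets) auto

lemma differentiable_matrix_inv_mult_vec:
  fixes M :: "real \<Rightarrow> 'a::real_normed_field^'n^'n" and a :: "real \<Rightarrow> 'a^'n"
  assumes "\<And>s. invertible (M s)"
    and "\<And>i j. (\<lambda>s. M s $ i $ j) differentiable (at x)"
    and "\<And>i. (\<lambda>s. a s $ i) differentiable (at x)"
  shows "(\<lambda>s. (matrix_inv (M s) *v a s) $ k) differentiable (at x)"
proof -
  have det_nz: "det (M s) \<noteq> 0" for s
    using assms(1) by (simp add: invertible_det_nz)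
  have "(matrix_inv (M s) *v a s) $ k
      = det (\<chi> i j. if j = k then a s $ i else M s $ i $ j) / det (M s)" for s
    using matrix_vector_mult_matrix_inv_cancel(1)[OF assms(1), of s "a s"]
    unfolding cramer[OF det_nz] by (simp add: vec_eq_iff)
  moreover have "(\<lambda>s. if j = k then a s $ i else M s $ i $ j) differentiable (at x)" for i j
    using assms(2,3) by (cases "j = k") simp_all
  then have "(\<lambda>s. det (\<chi> i j. if j = k then a s $ i else M s $ i $ j) / det (M s))
      differentiable (at x)"
    by (intro differentiable_divide differentiable_det det_nz) (simp_all add: assms(2))
  ultimately show ?thesis by simp
qed

lemma has_vector_derivative_matrix_inv_mult_vec:
  fixes M :: "real \<Rightarrow> complex^'n^'n" and a :: "real \<Rightarrow> complex^'n"
  assumes inv: "\<And>s. invertible (M s)"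
    and dM: "\<And>i j. ((\<lambda>s. M s $ i $ j) has_vector_derivative M' $ i $ j) (at x)"
    and da: "\<And>i. ((\<lambda>s. a s $ i) has_vector_derivative a' $ i) (at x)"
  shows "((\<lambda>s. (matrix_inv (M s) *v a s) $ k) has_vector_derivative
           (matrix_inv (M x) *v (a' - M' *v (matrix_inv (M x) *v a x))) $ k) (at x)"
proof -
  define y where "y s = matrix_inv (M s) *v a s" for s
  define y' where "y' = (\<chi> k. vector_derivative (\<lambda>s. y s $ k) (at x))"
  have "(\<lambda>s. y s $ k) differentiable (at x)" for k
    unfolding y_def
    by (rule differentiable_matrix_inv_mult_vec[OF inv differentiableI_vector differentiableI_vector])
      (fact dM da)+
  then have dy: "((\<lambda>s. y s $ k) has_vector_derivative y' $ k) (at x)" for k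
    unfolding y'_def by (simp add: vector_derivative_works[symmetric])
  have "((\<lambda>s. (M s *v y s) $ i) has_vector_derivative (M x *v y' + M' *v y x) $ i) (at x)" for i
    unfolding matrix_vector_mult_def vec_lambda_beta vector_add_component
    by (rule has_vector_derivative_eq_rhs[OF has_vector_derivative_sum[OF has_vector_derivative_mult[OF dM dy]]])
      (simp add: sum.distrib)
  moreover have "M s *v y s = a s" for s
    unfolding y_def by (rule matrix_vector_mult_matrix_inv_cancel(1)[OF inv])
  ultimately have "M x *v y' + M' *v y x = a'"
    using vector_derivative_unique_at[OF _ da] by (simp add: vec_eq_iff)
  then have "M x *v y' = a' - M' *v y x"
    by (simp add: eq_diff_eq)
  then have "y' = matrix_inv (M x) *v (a' - M' *v y x)"
    by (metis matrix_vector_mult_matrix_inv_cancel(2)[OF inv])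
  with dy show ?thesis unfolding y_def by simp
qed

lemma has_vector_derivative_hdot_matrix_inv_mult_vec:
  fixes M :: "real \<Rightarrow> complex^'n^'n" and a b :: "real \<Rightarrow> complex^'n"
  assumes inv: "\<And>s. invertible (M s)"
    and dM: "\<And>i j. ((\<lambda>s. M s $ i $ j) has_vector_derivative M' $ i $ j) (at x)"
    and da: "\<And>i. ((\<lambda>s. a s $ i) has_vector_derivative a' $ i) (at x)"
    and db: "\<And>i. ((\<lambda>s. b s $ i) has_vector_derivative b' $ i) (at x)"
  shows "((\<lambda>s. hdot (b s) (matrix_inv (M s) *v a s)) has_vector_derivative
           hdot b' (matrix_inv (M x) *v a x)
           + hdot (matrix_inv (ctrans (M x)) *v b x) (a' - M' *v (matrix_inv (M x) *v a x))) (at x)"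
proof -
  note dy = has_vector_derivative_matrix_inv_mult_vec[OF inv dM da]
  have "((\<lambda>s. hdot (b s) (matrix_inv (M s) *v a s)) has_vector_derivative
           hdot (b x) (matrix_inv (M x) *v (a' - M' *v (matrix_inv (M x) *v a x)))
           + hdot b' (matrix_inv (M x) *v a x)) (at x)"
    unfolding hdot_def
    by (rule has_vector_derivative_eq_rhs[OF has_vector_derivative_sum[OF
          has_vector_derivative_mult[OF has_vector_derivative_cnj[OF db] dy]]])
      (simp add: sum.distrib)
  then show ?thesis
    by (simp only: hdot_matrix_inv_mult_vec[OF inv] add.commute)
qed

section \<open>The matrix M and the x-part of the Lax pair\<close>

lemma Mmat_nth:
  "Mmat lam ph $ i $ j =
     ((cnj (ph j $ 1) * ph i $ 1 + cnj (ph j $ 2) * ph i $ 2) / (cnj (lam j) - lam i)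
      - (cnj (ph j $ 1) * ph i $ 1 - cnj (ph j $ 2) * ph i $ 2) / (cnj (lam j) + lam i))
     * lam i * cnj (lam j)"
  by (simp add: Mmat_def hdot_2 sigma3_def matrix_vector_mult_def sum_2)

lemma two_pole_identities:
  fixes p q S T :: complex
  assumes "q - p \<noteq> 0" "q + p \<noteq> 0"
  shows "(S / (q - p) - T / (q + p)) * (q\<^sup>2 - p\<^sup>2) = S * (q + p) - T * (q - p)"
    and "p * (S / (p - q) - T / (p + q)) + q * (S / (q - p) - T / (q + p)) = S - T"
proof -
  define X Z where "X = S / (q - p)" and "Z = T / (q + p)"
  have S: "S = X * (q - p)" and T: "T = Z * (q + p)"
    using assms by (simp_all add: X_def Z_def)
  have "S / (p - q) = - X"
    unfolding X_def by (metis minus_diff_eq divide_minus_right)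
  moreover have "T / (p + q) = Z"
    unfolding Z_def by (simp add: add.commute)
  ultimately
  show "p * (S / (p - q) - T / (p + q)) + q * (S / (q - p) - T / (q + p)) = S - T"
    unfolding X_def[symmetric] Z_def[symmetric] by (simp add: S T algebra_simps)
  show "(S / (q - p) - T / (q + p)) * (q\<^sup>2 - p\<^sup>2) = S * (q + p) - T * (q - p)"
    unfolding X_def[symmetric] Z_def[symmetric] by (simp add: S T algebra_simps power2_eq_square)
qed

lemma Mmat_nth_sylvester:
  assumes "cnj (lam j) \<noteq> lam i" "cnj (lam j) \<noteq> - lam i"
  shows "Mmat lam ph $ i $ j * (cnj (lam j) ^ 2 - lam i ^ 2)
    = 2 * (lam i * ph i $ 2 * cnj (lam j ^ 2 * ph j $ 2) + lam i ^ 2 * ph i $ 1 * cnj (lam j * ph j $ 1))"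
proof -
  define p q where "p = lam i" and "q = cnj (lam j)"
  define S T where "S = cnj (ph j $ 1) * ph i $ 1 + cnj (ph j $ 2) * ph i $ 2"
    and "T = cnj (ph j $ 1) * ph i $ 1 - cnj (ph j $ 2) * ph i $ 2"
  have "q - p \<noteq> 0" "q + p \<noteq> 0"
    using assms by (auto simp: p_def q_def add_eq_0_iff)
  have "Mmat lam ph $ i $ j * (q\<^sup>2 - p\<^sup>2) = p * q * ((S / (q - p) - T / (q + p)) * (q\<^sup>2 - p\<^sup>2))"
    unfolding Mmat_nth p_def q_def S_def T_def by (simp only: mult_ac)
  also have "\<dots> = p * q * (S * (q + p) - T * (q - p))"
    by (simp only: two_pole_identities(1)[OF \<open>q - p \<noteq> 0\<close> \<open>q + p \<noteq> 0\<close>])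
  finally show ?thesis
    unfolding p_def q_def S_def T_def by (simp add: algebra_simps power2_eq_square)
qed

lemma Mmat_nth_adjoint:
  assumes "cnj (lam j) \<noteq> lam i" "cnj (lam j) \<noteq> - lam i"
  shows "lam i * cnj (Mmat lam ph $ j $ i) + Mmat lam ph $ i $ j * cnj (lam j)
    = 2 * lam i * ph i $ 2 * cnj (lam j * ph j $ 2)"
proof -
  define p q where "p = lam i" and "q = cnj (lam j)"
  define S T where "S = cnj (ph j $ 1) * ph i $ 1 + cnj (ph j $ 2) * ph i $ 2"
    and "T = cnj (ph j $ 1) * ph i $ 1 - cnj (ph j $ 2) * ph i $ 2"
  have "q - p \<noteq> 0" "q + p \<noteq> 0"
    using assms by (auto simp: p_def q_def add_eq_0_iff)
  have "cnj (Mmat lam ph $ j $ i) = (S / (p - q) - T / (p + q)) * q * p"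
    unfolding Mmat_nth p_def q_def S_def T_def by (simp add: mult_ac)
  then have "p * cnj (Mmat lam ph $ j $ i) + Mmat lam ph $ i $ j * q
      = p * q * (p * (S / (p - q) - T / (p + q)) + q * (S / (q - p) - T / (q + p)))"
    unfolding Mmat_nth p_def q_def S_def T_def by (simp add: algebra_simps)
  also have "\<dots> = p * q * (S - T)"
    by (simp only: two_pole_identities(2)[OF \<open>q - p \<noteq> 0\<close> \<open>q + p \<noteq> 0\<close>])
  finally show ?thesis
    unfolding p_def q_def S_def T_def by (simp add: algebra_simps)
qed

lemma Mmat_sylvester:
  assumes "\<And>i j. cnj (lam j) \<noteq> lam i \<and> cnj (lam j) \<noteq> - lam i"
  shows "Mmat lam ph ** ctrans (diagm lam ** diagm lam) - (diagm lam ** diagm lam) ** Mmat lam ph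
    = cscale 2 (outer (diagm lam *v comp_vec ph 2) ((diagm lam ** diagm lam) *v comp_vec ph 2)
                + outer ((diagm lam ** diagm lam) *v comp_vec ph 1) (diagm lam *v comp_vec ph 1))"
    (is "?L = ?R")
proof -
  have "?L $ i $ j = ?R $ i $ j" for i j
  proof -
    have "?L $ i $ j = Mmat lam ph $ i $ j * (cnj (lam j) ^ 2 - lam i ^ 2)"
      by (simp add: diagm_matrix_mult_diagm ctrans_diagm matrix_mult_diagm_nth diagm_matrix_mult_nth
          algebra_simps power2_eq_square)
    also have "\<dots> = 2 * (lam i * ph i $ 2 * cnj (lam j ^ 2 * ph j $ 2)
                        + lam i ^ 2 * ph i $ 1 * cnj (lam j * ph j $ 1))"
      using assms by (intro Mmat_nth_sylvester) auto
    also have "\<dots> = ?R $ i $ j"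
      by (simp add: cscale_def outer_def diagm_mult_vec diagm_matrix_mult_diagm comp_vec_def
          power2_eq_square)
    finally show ?thesis .
  qed
  then show ?thesis by (simp add: vec_eq_iff)
qed

lemma Mmat_adjoint:
  assumes "\<And>i j. cnj (lam j) \<noteq> lam i \<and> cnj (lam j) \<noteq> - lam i"
  shows "diagm lam ** ctrans (Mmat lam ph) + Mmat lam ph ** ctrans (diagm lam)
    = cscale 2 (outer (diagm lam *v comp_vec ph 2) (diagm lam *v comp_vec ph 2))"
    (is "?L = ?R")
proof -
  have "?L $ i $ j = ?R $ i $ j" for i j
  proof -
    have "?L $ i $ j = lam i * cnj (Mmat lam ph $ j $ i) + Mmat lam ph $ i $ j * cnj (lam j)"
      by (simp add: ctrans_diagm matrix_mult_diagm_nth diagm_matrix_mult_nth) (simp add: ctrans_def)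
    also have "\<dots> = 2 * lam i * ph i $ 2 * cnj (lam j * ph j $ 2)"
      using assms by (intro Mmat_nth_adjoint) auto
    also have "\<dots> = ?R $ i $ j"
      by (simp add: cscale_def outer_def diagm_mult_vec comp_vec_def mult.assoc)
    finally show ?thesis .
  qed
  then show ?thesis by (simp add: vec_eq_iff)
qed

lemma Umat_Qmat_mult_vec_nth:
  "(Umat (Qmat w) l *v v) $ 1 = -2 * \<i> * l ^ 2 * v $ 1 + 2 * \<i> * l * w * v $ 2"
  "(Umat (Qmat w) l *v v) $ 2 = 2 * \<i> * l * cnj w * v $ 1 + 2 * \<i> * l ^ 2 * v $ 2"
  by (simp_all add: Umat_def Qmat_def sigma3_def cscale_def matrix_vector_mult_def sum_2 algebra_simps)

lemma has_vector_derivative_comp_vec_Umat: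
  fixes ph :: "'n::finite \<Rightarrow> real \<Rightarrow> complex^2"
  assumes "\<And>i. (ph i has_vector_derivative Umat (Qmat w) (lam i) *v ph i x) (at x)"
  shows "((\<lambda>s. comp_vec (\<lambda>i. ph i s) 1 $ i) has_vector_derivative
           ((-2 * \<i>) *s ((diagm lam ** diagm lam) *v comp_vec (\<lambda>i. ph i x) 1)
            + (2 * \<i> * w) *s (diagm lam *v comp_vec (\<lambda>i. ph i x) 2)) $ i) (at x)"
    and "((\<lambda>s. comp_vec (\<lambda>i. ph i s) 2 $ i) has_vector_derivative
           ((2 * \<i> * cnj w) *s (diagm lam *v comp_vec (\<lambda>i. ph i x) 1)
            + (2 * \<i>) *s ((diagm lam ** diagm lam) *v comp_vec (\<lambda>i. ph i x) 2)) $ i) (at x)"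
proof -
  have d: "((\<lambda>s. ph i s $ k) has_vector_derivative (Umat (Qmat w) (lam i) *v ph i x) $ k) (at x)" for k
    by (rule bounded_linear.has_vector_derivative[OF bounded_linear_vec_nth assms])
  show "((\<lambda>s. comp_vec (\<lambda>i. ph i s) 1 $ i) has_vector_derivative
           ((-2 * \<i>) *s ((diagm lam ** diagm lam) *v comp_vec (\<lambda>i. ph i x) 1)
            + (2 * \<i> * w) *s (diagm lam *v comp_vec (\<lambda>i. ph i x) 2)) $ i) (at x)"
    unfolding comp_vec_def vec_lambda_beta
    by (rule has_vector_derivative_eq_rhs[OF d[of 1]])
      (simp add: comp_vec_def diagm_mult_vec diagm_matrix_mult_diagm Umat_Qmat_mult_vec_nth
        power2_eq_square mult_ac)
  show "((\<lambda>s. comp_vec (\<lambda>i. ph i s) 2 $ i) has_vector_derivative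
           ((2 * \<i> * cnj w) *s (diagm lam *v comp_vec (\<lambda>i. ph i x) 1)
            + (2 * \<i>) *s ((diagm lam ** diagm lam) *v comp_vec (\<lambda>i. ph i x) 2)) $ i) (at x)"
    unfolding comp_vec_def vec_lambda_beta
    by (rule has_vector_derivative_eq_rhs[OF d[of 2]])
      (simp add: comp_vec_def diagm_mult_vec diagm_matrix_mult_diagm Umat_Qmat_mult_vec_nth
        power2_eq_square mult_ac)
qed

lemma has_vector_derivative_Mmat:
  fixes ph :: "'n::finite \<Rightarrow> real \<Rightarrow> complex^2"
  assumes "\<And>i j. cnj (lam j) \<noteq> lam i \<and> cnj (lam j) \<noteq> - lam i"
    and "\<And>i. (ph i has_vector_derivative Umat (Qmat w) (lam i) *v ph i x) (at x)"
  defines "L \<equiv> diagm lam" and "A \<equiv> comp_vec (\<lambda>i. ph i x) 1" and "B \<equiv> comp_vec (\<lambda>i. ph i x) 2"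
  shows "((\<lambda>s. Mmat lam (\<lambda>i. ph i s) $ i $ j) has_vector_derivative
           cscale (4 * \<i>) (outer ((L ** L) *v A) (L *v A) - outer (L *v B) ((L ** L) *v B)
                             - cscale w (outer (L *v B) (L *v A))) $ i $ j) (at x)"
proof -
  have nz: "cnj (lam j) - lam i \<noteq> 0" "cnj (lam j) + lam i \<noteq> 0"
    using assms(1)[of j i] by (auto simp: add_eq_0_iff)
  then have nz_square: "cnj (lam j) * cnj (lam j) - lam i * lam i \<noteq> 0"
    by (metis mult_eq_0_iff square_diff_square_factored)
  note dA = has_vector_derivative_comp_vec_Umat(1)[OF assms(2), unfolded comp_vec_def vec_lambda_beta]
  note dB = has_vector_derivative_comp_vec_Umat(2)[OF assms(2), unfolded comp_vec_def vec_lambda_beta]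
  show ?thesis
    unfolding Mmat_nth
    by (rule has_vector_derivative_eq_rhs,
        (rule dA dB has_vector_derivative_mult has_vector_derivative_divide has_vector_derivative_add
          has_vector_derivative_diff has_vector_derivative_cnj has_vector_derivative_const)+)
      (use nz nz_square in \<open>simp add: L_def A_def B_def cscale_def outer_def diagm_mult_vec
          diagm_matrix_mult_diagm comp_vec_def field_simps\<close>)
qed

locale lax_x_flow =
  fixes lam :: "'n::finite \<Rightarrow> complex"
    and phi :: "'n \<Rightarrow> real \<Rightarrow> complex^2"
    and u :: "real \<Rightarrow> complex"
    and x :: real
  assumes spectral: "\<And>i j. cnj (lam j) \<noteq> lam i \<and> cnj (lam j) \<noteq> - lam i"
    and lax_x: "\<And>i. (phi i has_vector_derivative Umat (Qmat (u x)) (lam i) *v phi i x) (at x)"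
    and M_invertible: "\<And>s. invertible (Mmat lam (\<lambda>i. phi i s))"
begin

abbreviation "L \<equiv> diagm lam"
abbreviation "M s \<equiv> Mmat lam (\<lambda>i. phi i s)"
abbreviation "A \<equiv> comp_vec (\<lambda>i. phi i x) 1"
abbreviation "B \<equiv> comp_vec (\<lambda>i. phi i x) 2"

definition "Y = matrix_inv (M x) *v A"
definition "W = matrix_inv (ctrans (M x)) *v B"

definition "a = hdot (L *v A) Y"
definition "b = hdot ((L ** L) *v B) Y"
definition "c = hdot W ((L ** L) *v A)"
definition "d = hdot W (L *v B)"
definition "e = hdot (L *v B) W"

lemma M_Y: "M x *v Y = A"
  unfolding Y_def by (rule matrix_vector_mult_matrix_inv_cancel(1)[OF M_invertible])

lemma ctrans_M_W: "ctrans (M x) *v W = B"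
  unfolding W_def by (rule matrix_vector_mult_matrix_inv_cancel(1)[OF invertible_ctrans[OF M_invertible]])

lemma sylvester_relation: "b - c = 2 * (d * b + c * a)"
proof -
  have "hdot W ((M x ** ctrans (L ** L) - (L ** L) ** M x) *v Y)
      = hdot (ctrans (M x) *v W) (ctrans (L ** L) *v Y) - hdot W ((L ** L) *v (M x *v Y))"
    by (simp add: matrix_vector_mult_diff_rdistrib hdot_diff_right hdot_ctrans_mult_vec
        matrix_vector_mul_assoc)
  also have "\<dots> = b - c"
    by (simp add: M_Y ctrans_M_W hdot_mult_vec_ctrans b_def c_def)
  finally show ?thesis
    by (simp add: Mmat_sylvester[OF spectral] cscale_mult_vec matrix_vector_mult_add_rdistrib
        outer_mult_vec hdot_add_right hdot_scale_right a_def b_def c_def d_def algebra_simps)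
qed

lemma adjoint_relation: "(1 - 2 * d) * (1 - 2 * e) = 1"
proof -
  have "hdot W ((L ** ctrans (M x) + M x ** ctrans L) *v W)
      = hdot W (L *v (ctrans (M x) *v W)) + hdot (ctrans (M x) *v W) (ctrans L *v W)"
    by (simp add: matrix_vector_mult_add_rdistrib hdot_add_right hdot_ctrans_mult_vec
        matrix_vector_mul_assoc)
  also have "\<dots> = d + e"
    by (simp add: ctrans_M_W hdot_mult_vec_ctrans d_def e_def)
  finally have "2 * e * d = d + e"
    by (simp add: Mmat_adjoint[OF spectral] cscale_mult_vec outer_mult_vec hdot_scale_right
        d_def e_def)
  then show ?thesis by (simp add: algebra_simps)
qed

lemma has_vector_derivative_potential:
  "((\<lambda>s. hdot (comp_vec (\<lambda>i. phi i s) 2) (matrix_inv (M s) *v comp_vec (\<lambda>i. phi i s) 1))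
     has_vector_derivative
       - 2 * \<i> * (u x * a + b + c - u x * d) - 4 * \<i> * (c * a - d * b - u x * d * a)) (at x)"
  by (rule has_vector_derivative_eq_rhs[OF has_vector_derivative_hdot_matrix_inv_mult_vec[OF
        M_invertible has_vector_derivative_Mmat[OF spectral lax_x]
        has_vector_derivative_comp_vec_Umat[OF lax_x]]])
    (simp add: Y_def[symmetric] W_def[symmetric] a_def b_def c_def d_def
      matrix_vector_mult_diff_rdistrib cscale_mult_vec outer_mult_vec hdot_add_left hdot_add_right
      hdot_diff_right hdot_scale_left hdot_scale_right algebra_simps)

lemma dressed_potentials_agree:
  "u x + \<i> * vector_derivative
       (\<lambda>s. hdot (comp_vec (\<lambda>i. phi i s) 2) (matrix_inv (M s) *v comp_vec (\<lambda>i. phi i s) 1)) (at x)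
   = ((1 + 2 * a) * u x + 4 * b) / (1 - 2 * e)"
proof -
  have "u x + \<i> * vector_derivative
       (\<lambda>s. hdot (comp_vec (\<lambda>i. phi i s) 2) (matrix_inv (M s) *v comp_vec (\<lambda>i. phi i s) 1)) (at x)
      = (1 - 2 * d) * ((1 + 2 * a) * u x + 4 * b) + 2 * (c - b + 2 * (d * b + c * a))"
    by (simp add: vector_derivative_at[OF has_vector_derivative_potential] algebra_simps)
  also have "\<dots> = (1 - 2 * d) * ((1 + 2 * a) * u x + 4 * b)"
    unfolding sylvester_relation[symmetric] by simp
  also have "\<dots> = ((1 + 2 * a) * u x + 4 * b) / (1 - 2 * e)"
  proof -
    have "1 - 2 * e \<noteq> 0"
      using adjoint_relation by auto
    with adjoint_relation have "1 - 2 * d = 1 / (1 - 2 * e)"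
      by (simp add: eq_divide_eq)
    then show ?thesis by simp
  qed
  finally show ?thesis .
qed

end

theorem mainTheorem2:
  fixes u :: "real \<times> real \<Rightarrow> complex"
    and lam :: "'n::finite \<Rightarrow> complex"
    and phi :: "'n \<Rightarrow> real \<times> real \<Rightarrow> complex^2"
    and x t :: real
  assumes u_bdd: "bounded (range u)"
    and u_smooth: "Cinf u"
    and dnls: "\<And>x t. \<i> * pt u (x, t) + px (px u) (x, t)
                 + 2 * \<i> * px (\<lambda>p. complex_of_real ((cmod (u p))\<^sup>2) * u p) (x, t) = 0"
    and lam_cond: "\<And>i j. cnj (lam j) \<noteq> lam i \<and> cnj (lam j) \<noteq> - lam i"
    and lax_x: "\<And>i x t. ((\<lambda>s. phi i (s, t)) has_vector_derivative
                   (Umat (Qmat (u (x, t))) (lam i) *v phi i (x, t))) (at x)"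
    and lax_t: "\<And>i x t. ((\<lambda>s. phi i (x, s)) has_vector_derivative
                   (Vmat (Qmat (u (x, t))) (Qmat (px u (x, t))) (lam i) *v phi i (x, t))) (at t)"
    and M_inv: "\<And>x t. invertible (Mmat lam (\<lambda>i. phi i (x, t)))"
    and den_nz: "\<And>x t. 1 - 2 * hdot (comp_vec (\<lambda>i. phi i (x, t)) 2)
                    (ctrans (diagm lam) *v (matrix_inv (ctrans (Mmat lam (\<lambda>i. phi i (x, t))))
                       *v comp_vec (\<lambda>i. phi i (x, t)) 2)) \<noteq> 0"
  shows
    "(let M = Mmat lam (\<lambda>i. phi i (x, t));
          p1 = comp_vec (\<lambda>i. phi i (x, t)) 1;
          p2 = comp_vec (\<lambda>i. phi i (x, t)) 2;
          LH = ctrans (diagm lam);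
          den = 1 - 2 * hdot p2 (LH *v (matrix_inv (ctrans M) *v p2));
          u0 = u (x, t) + \<i> * vector_derivative
                 (\<lambda>s. hdot (comp_vec (\<lambda>i. phi i (s, t)) 2)
                        (matrix_inv (Mmat lam (\<lambda>i. phi i (s, t))) *v comp_vec (\<lambda>i. phi i (s, t)) 1))
                 (at x);
          uinf = (1 + 2 * hdot p1 (LH *v (matrix_inv M *v p1))) / den * u (x, t)
                 + 4 * hdot p2 ((LH ** LH) *v (matrix_inv M *v p1)) / den
      in u0 = uinf)"
proof -
  interpret lax_x_flow lam "\<lambda>i s. phi i (s, t)" "\<lambda>s. u (s, t)" x
    using lam_cond lax_x M_inv by unfold_locales
  have "hdot A (ctrans L *v (matrix_inv (M x) *v A)) = a"
    by (simp add: a_def Y_def hdot_mult_vec_ctrans)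
  moreover have "hdot B ((ctrans L ** ctrans L) *v (matrix_inv (M x) *v A)) = b"
    by (simp add: b_def Y_def hdot_mult_vec_ctrans flip: ctrans_matrix_mult)
  moreover have "hdot B (ctrans L *v (matrix_inv (ctrans (M x)) *v B)) = e"
    by (simp add: e_def W_def hdot_mult_vec_ctrans)
  ultimately show ?thesis
    unfolding Let_def dressed_potentials_agree by (simp add: add_divide_distrib ring_distribs)
qed

end
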